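(* Let $P\in\Delta$ and $Q_P\in\Delta_P$. The following are equivalent: (1) $MI_{Q_P}(X:Y|Z)=\min_{Q\in\Delta_P}MI_Q(X:Y|Z)$; (2) $MI_{Q_P}(X:Z|Y)=\min_{Q\in\Delta_P}MI_Q(X:Z|Y)$; (3) $MI_{Q_P}(X:(Y,Z))=\min_{Q\in\Delta_P}MI_Q(X:(Y,Z))$; (4) $CoI_{Q_P}(X;Y;Z)=\max_{Q\in\Delta_P}CoI_Q(X;Y;Z)$; (5) $H_{Q_P}(X|Y,Z)=\max_{Q\in\Delta_P}H_Q(X|Y,Z)$. Moreover, $Q\mapsto MI_Q(X:Y|Z)$, $Q\mapsto MI_Q(X:Z|Y)$ and $Q\mapsto MI_Q(X:(Y,Z))$ are convex on $\Delta_P$, and $Q\mapsto CoI_Q(X;Y;Z)$ and $Q\mapsto H_Q(X|Y,Z)$ are concave on $\Delta_P$. Consequently, for fixed $P$, the set of all $Q_P\in\Delta_P$ satisfying these conditions is convex.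
   Context: $X,Y,Z$ are random variables with finite state spaces $\mathcal X,\mathcal Y,\mathcal Z$. $\Delta$ denotes the set of all probability distributions on $\mathcal X\times\mathcal Y\times\mathcal Z$; a subscript $Q$ on an information quantity means it is computed w.r.t. $Q\in\Delta$. For $P\in\Delta$, $\Delta_P=\{Q\in\Delta: Q(X=x,Y=y)=P(X=x,Y=y)\text{ and }Q(X=x,Z=z)=P(X=x,Z=z)\ \forall x,y,z\}$. Co-information: $CoI_Q(X;Y;Z)=MI_Q(X:Y)-MI_Q(X:Y|Z)$. *)

theory Defs
  imports "HOL-Analysis.Analysis"
begin

type_synonym ('x,'y,'z) dist3 = "real ^ ('x \<times> 'y \<times> 'z)"

definition Delta :: "('x::finite,'y::finite,'z::finite) dist3 set" where
  "Delta = {Q. (\<forall>w. 0 \<le> Q $ w) \<and> (\<Sum>w\<in>UNIV. Q $ w) = 1}"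

definition pXY :: "('x::finite,'y::finite,'z::finite) dist3 \<Rightarrow> 'x \<Rightarrow> 'y \<Rightarrow> real" where
  "pXY Q x y = (\<Sum>z\<in>UNIV. Q $ (x,y,z))"
definition pXZ :: "('x::finite,'y::finite,'z::finite) dist3 \<Rightarrow> 'x \<Rightarrow> 'z \<Rightarrow> real" where
  "pXZ Q x z = (\<Sum>y\<in>UNIV. Q $ (x,y,z))"
definition pYZ :: "('x::finite,'y::finite,'z::finite) dist3 \<Rightarrow> 'y \<Rightarrow> 'z \<Rightarrow> real" where
  "pYZ Q y z = (\<Sum>x\<in>UNIV. Q $ (x,y,z))"
definition pX :: "('x::finite,'y::finite,'z::finite) dist3 \<Rightarrow> 'x \<Rightarrow> real" where
  "pX Q x = (\<Sum>y\<in>UNIV. \<Sum>z\<in>UNIV. Q $ (x,y,z))"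
definition pY :: "('x::finite,'y::finite,'z::finite) dist3 \<Rightarrow> 'y \<Rightarrow> real" where
  "pY Q y = (\<Sum>x\<in>UNIV. \<Sum>z\<in>UNIV. Q $ (x,y,z))"
definition pZ :: "('x::finite,'y::finite,'z::finite) dist3 \<Rightarrow> 'z \<Rightarrow> real" where
  "pZ Q z = (\<Sum>x\<in>UNIV. \<Sum>y\<in>UNIV. Q $ (x,y,z))"

definition DeltaP :: "('x::finite,'y::finite,'z::finite) dist3 \<Rightarrow> ('x,'y,'z) dist3 set" where
  "DeltaP P = {Q \<in> Delta. (\<forall>x y. pXY Q x y = pXY P x y) \<and> (\<forall>x z. pXZ Q x z = pXZ P x z)}"

definition MI_XY_Z :: "('x::finite,'y::finite,'z::finite) dist3 \<Rightarrow> real" where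
  "MI_XY_Z Q = (\<Sum>(x,y,z)\<in>UNIV. if Q $ (x,y,z) = 0 then 0 else
      Q $ (x,y,z) * log 2 (Q $ (x,y,z) * pZ Q z / (pXZ Q x z * pYZ Q y z)))"

definition MI_XZ_Y :: "('x::finite,'y::finite,'z::finite) dist3 \<Rightarrow> real" where
  "MI_XZ_Y Q = (\<Sum>(x,y,z)\<in>UNIV. if Q $ (x,y,z) = 0 then 0 else
      Q $ (x,y,z) * log 2 (Q $ (x,y,z) * pY Q y / (pXY Q x y * pYZ Q y z)))"

definition MI_X_YZ :: "('x::finite,'y::finite,'z::finite) dist3 \<Rightarrow> real" where
  "MI_X_YZ Q = (\<Sum>(x,y,z)\<in>UNIV. if Q $ (x,y,z) = 0 then 0 else
      Q $ (x,y,z) * log 2 (Q $ (x,y,z) / (pX Q x * pYZ Q y z)))"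

definition MI_XY :: "('x::finite,'y::finite,'z::finite) dist3 \<Rightarrow> real" where
  "MI_XY Q = (\<Sum>(x,y)\<in>UNIV. if pXY Q x y = 0 then 0 else
      pXY Q x y * log 2 (pXY Q x y / (pX Q x * pY Q y)))"

definition CoI :: "('x::finite,'y::finite,'z::finite) dist3 \<Rightarrow> real" where
  "CoI Q = MI_XY Q - MI_XY_Z Q"

definition H_X_YZ :: "('x::finite,'y::finite,'z::finite) dist3 \<Rightarrow> real" where
  "H_X_YZ Q = - (\<Sum>(x,y,z)\<in>UNIV. if Q $ (x,y,z) = 0 then 0 else
      Q $ (x,y,z) * log 2 (Q $ (x,y,z) / pYZ Q y z))"

end

theory Submission imports Defs begin

text \<open>On \<open>\<Delta>\<^sub>P\<close> the marginals of \<open>(X,Y)\<close> and \<open>(X,Z)\<close> are fixed, hence so are \<open>H(X)\<close>, \<open>H(X|Y)\<close>,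
  \<open>H(X|Z)\<close> and \<open>MI(X:Y)\<close>.  By the chain rule
  \<open>MI(X:Y|Z) = H(X|Z) - H(X|Y,Z)\<close>, \<open>MI(X:Z|Y) = H(X|Y) - H(X|Y,Z)\<close>, \<open>MI(X:(Y,Z)) = H(X) - H(X|Y,Z)\<close> and
  \<open>CoI = MI(X:Y) - H(X|Z) + H(X|Y,Z)\<close>, so on \<open>\<Delta>\<^sub>P\<close> all five quantities are a constant
  plus or minus \<open>H(X|Y,Z)\<close>.  Everything therefore reduces to the concavity of \<open>H(X|Y,Z)\<close>, which is
  the log-sum inequality applied to \<open>q ln (q / q\<^sub>Y\<^sub>Z)\<close>.\<close>

subsection \<open>The log-sum inequality\<close>

definition xlog_ratio :: "real \<Rightarrow> real \<Rightarrow> real" where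
  "xlog_ratio a b = (if a = 0 then 0 else a * ln (a / b))"

lemma xlog_ratio_tangent_bound:
  fixes a b A B :: real
  assumes "0 \<le> a" "a > 0 \<Longrightarrow> b > 0" "0 \<le> b" "A > 0" "B > 0"
  shows "a * ln (A / B) - xlog_ratio a b \<le> b * A / B - a"
proof (cases "a = 0")
  case True
  then show ?thesis using assms by (simp add: xlog_ratio_def)
next
  case False
  with assms have a: "a > 0" and b: "b > 0" by auto
  have "ln (A / B) - ln (a / b) = ln ((A * b) / (B * a))"
    using a b assms by (simp add: ln_div ln_mult)
  also have "\<dots> \<le> (A * b) / (B * a) - 1"
    using a b assms by (intro ln_le_minus_one) simp
  finally have "a * (ln (A / B) - ln (a / b)) \<le> a * ((A * b) / (B * a) - 1)"
    using a by (intro mult_left_mono) auto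
  then show ?thesis using a by (simp add: xlog_ratio_def algebra_simps)
qed

lemma xlog_ratio_subadditive:
  fixes a1 a2 b1 b2 :: real
  assumes "0 \<le> a1" "0 \<le> a2" "a1 > 0 \<Longrightarrow> b1 > 0" "a2 > 0 \<Longrightarrow> b2 > 0" "0 \<le> b1" "0 \<le> b2"
  shows "xlog_ratio (a1 + a2) (b1 + b2) \<le> xlog_ratio a1 b1 + xlog_ratio a2 b2"
proof (cases "a1 + a2 = 0")
  case True
  with assms have "a1 = 0" "a2 = 0" by auto
  then show ?thesis by (simp add: xlog_ratio_def)
next
  case False
  with assms have A: "a1 + a2 > 0" by auto
  with assms have B: "b1 + b2 > 0" by (cases "a1 > 0") auto
  let ?L = "ln ((a1 + a2) / (b1 + b2))"
  have "a1 * ?L - xlog_ratio a1 b1 \<le> b1 * (a1 + a2) / (b1 + b2) - a1"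
    and "a2 * ?L - xlog_ratio a2 b2 \<le> b2 * (a1 + a2) / (b1 + b2) - a2"
    using assms A B by (intro xlog_ratio_tangent_bound; auto)+
  moreover have "b1 * (a1 + a2) / (b1 + b2) + b2 * (a1 + a2) / (b1 + b2) = a1 + a2"
  proof -
    have "b1 * (a1 + a2) / (b1 + b2) + b2 * (a1 + a2) / (b1 + b2) = (b1 + b2) * (a1 + a2) / (b1 + b2)"
      by (simp add: add_divide_distrib distrib_right)
    then show ?thesis using B by simp
  qed
  moreover have "xlog_ratio (a1 + a2) (b1 + b2) = a1 * ?L + a2 * ?L"
    using False by (simp add: xlog_ratio_def algebra_simps)
  ultimately show ?thesis by linarith
qed

lemma xlog_ratio_scale: "0 \<le> t \<Longrightarrow> xlog_ratio (t * a) (t * b) = t * xlog_ratio a b"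
  by (cases "t = 0") (auto simp: xlog_ratio_def)

lemma xlog_ratio_convex:
  fixes a1 a2 b1 b2 u v :: real
  assumes "0 \<le> a1" "0 \<le> a2" "a1 > 0 \<Longrightarrow> b1 > 0" "a2 > 0 \<Longrightarrow> b2 > 0" "0 \<le> b1" "0 \<le> b2"
    and "0 \<le> u" "0 \<le> v"
  shows "xlog_ratio (u * a1 + v * a2) (u * b1 + v * b2) \<le> u * xlog_ratio a1 b1 + v * xlog_ratio a2 b2"
proof -
  have "xlog_ratio (u * a1 + v * a2) (u * b1 + v * b2)
        \<le> xlog_ratio (u * a1) (u * b1) + xlog_ratio (v * a2) (v * b2)"
    using assms by (intro xlog_ratio_subadditive) (auto simp: zero_less_mult_iff)
  then show ?thesis using assms by (simp add: xlog_ratio_scale)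
qed

lemma convex_on_cong:
  assumes "convex_on S f" and "\<And>x. x \<in> S \<Longrightarrow> f x = g x"
  shows "convex_on S g"
  using assms convex_on_imp_convex[OF assms(1)] unfolding convex_on_def convex_def by simp

lemma concave_on_cong:
  assumes "concave_on S f" and "\<And>x. x \<in> S \<Longrightarrow> f x = g x"
  shows "concave_on S g"
  using assms unfolding concave_on_def by (auto intro: convex_on_cong)

lemma convex_minimizers:
  assumes "convex_on S f"
  shows "convex {x \<in> S. \<forall>y\<in>S. f x \<le> f y}"
  unfolding convex_def
proof (intro ballI allI impI)
  fix a b and u v :: real
  assume a: "a \<in> {x \<in> S. \<forall>y\<in>S. f x \<le> f y}" and b: "b \<in> {x \<in> S. \<forall>y\<in>S. f x \<le> f y}"
    and uv: "0 \<le> u" "0 \<le> v" "u + v = 1"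
  have mem: "u *\<^sub>R a + v *\<^sub>R b \<in> S"
    using convex_on_imp_convex[OF assms] a b uv by (simp add: convex_def)
  have "f (u *\<^sub>R a + v *\<^sub>R b) \<le> f y" if y: "y \<in> S" for y
  proof -
    have "f (u *\<^sub>R a + v *\<^sub>R b) \<le> u * f a + v * f b"
      using assms a b uv by (simp add: convex_on_def)
    also have "\<dots> \<le> u * f y + v * f y"
      using a b y uv by (intro add_mono mult_left_mono) auto
    also have "\<dots> = f y" using uv by (simp flip: distrib_right)
    finally show ?thesis .
  qed
  with mem show "u *\<^sub>R a + v *\<^sub>R b \<in> {x \<in> S. \<forall>y\<in>S. f x \<le> f y}" by simp
qed

lemma sum_UNIV_triple:
  "(\<Sum>(x,y,z)\<in>UNIV. f x y z) = (\<Sum>x\<in>UNIV. \<Sum>y\<in>UNIV. \<Sum>z\<in>UNIV. f x y z)"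
  by (simp add: UNIV_Times_UNIV[symmetric] sum.cartesian_product del: UNIV_Times_UNIV)

lemma pX_eq_sum_pXY: "pX Q x = (\<Sum>y\<in>UNIV. pXY Q x y)"
  by (simp add: pX_def pXY_def)

lemma pY_eq_sum_pXY: "pY Q y = (\<Sum>x\<in>UNIV. pXY Q x y)"
  by (simp add: pY_def pXY_def)

lemma pZ_eq_sum_pXZ: "pZ Q z = (\<Sum>x\<in>UNIV. pXZ Q x z)"
  by (simp add: pZ_def pXZ_def)

lemma Delta_nonneg: "Q \<in> Delta \<Longrightarrow> 0 \<le> Q $ w"
  by (cases w) (simp add: Delta_def)

lemma
  assumes "Q \<in> Delta"
  shows pXY_ge: "Q $ (x,y,z) \<le> pXY Q x y"
    and pXZ_ge: "Q $ (x,y,z) \<le> pXZ Q x z"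
    and pYZ_ge: "Q $ (x,y,z) \<le> pYZ Q y z"
    and pX_ge: "Q $ (x,y,z) \<le> pX Q x"
    and pY_ge: "Q $ (x,y,z) \<le> pY Q y"
    and pZ_ge: "Q $ (x,y,z) \<le> pZ Q z"
proof -
  have nn: "0 \<le> Q $ w" for w using Delta_nonneg[OF assms] .
  have nn_XY: "0 \<le> pXY Q x' y'" and nn_XZ: "0 \<le> pXZ Q x' z'" for x' y' z'
    by (simp_all add: pXY_def pXZ_def sum_nonneg nn)
  show XY: "Q $ (x,y,z) \<le> pXY Q x y"
    unfolding pXY_def by (rule member_le_sum[where f="\<lambda>z. Q $ (x,y,z)"]) (simp_all add: nn)
  show XZ: "Q $ (x,y,z) \<le> pXZ Q x z"
    unfolding pXZ_def by (rule member_le_sum[where f="\<lambda>y. Q $ (x,y,z)"]) (simp_all add: nn)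
  show "Q $ (x,y,z) \<le> pYZ Q y z"
    unfolding pYZ_def by (rule member_le_sum[where f="\<lambda>x. Q $ (x,y,z)"]) (simp_all add: nn)
  show "Q $ (x,y,z) \<le> pX Q x"
    using XY member_le_sum[of y UNIV "pXY Q x"] nn_XY by (simp add: pX_eq_sum_pXY)
  show "Q $ (x,y,z) \<le> pY Q y"
    using XY member_le_sum[of x UNIV "\<lambda>x. pXY Q x y"] nn_XY by (simp add: pY_eq_sum_pXY)
  show "Q $ (x,y,z) \<le> pZ Q z"
    using XZ member_le_sum[of x UNIV "\<lambda>x. pXZ Q x z"] nn_XZ by (simp add: pZ_eq_sum_pXZ)
qed

lemma sum_weighted_X: "(\<Sum>(x,y,z)\<in>UNIV. Q $ (x,y,z) * g x) = (\<Sum>x\<in>UNIV. pX Q x * g x)"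
  by (simp add: sum_UNIV_triple pX_def sum_distrib_right)

lemma sum_weighted_Y: "(\<Sum>(x,y,z)\<in>UNIV. Q $ (x,y,z) * g y) = (\<Sum>y\<in>UNIV. pY Q y * g y)"
  unfolding sum_UNIV_triple pY_def sum_distrib_right by (rule sum.swap)

lemma sum_swap_inner: "(\<Sum>x\<in>A. \<Sum>y\<in>B. \<Sum>z\<in>C. f x y z) = (\<Sum>x\<in>A. \<Sum>z\<in>C. \<Sum>y\<in>B. f x y z)"
  by (rule sum.cong[OF refl], rule sum.swap)

lemma sum_weighted_Z: "(\<Sum>(x,y,z)\<in>UNIV. Q $ (x,y,z) * g z) = (\<Sum>z\<in>UNIV. pZ Q z * g z)"
  unfolding sum_UNIV_triple pZ_def sum_distrib_right by (rule trans[OF sum_swap_inner sum.swap])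

lemma sum_weighted_XY:
  "(\<Sum>(x,y,z)\<in>UNIV. Q $ (x,y,z) * g x y) = (\<Sum>x\<in>UNIV. \<Sum>y\<in>UNIV. pXY Q x y * g x y)"
  unfolding sum_UNIV_triple pXY_def sum_distrib_right ..

lemma sum_weighted_XZ:
  "(\<Sum>(x,y,z)\<in>UNIV. Q $ (x,y,z) * g x z) = (\<Sum>x\<in>UNIV. \<Sum>z\<in>UNIV. pXZ Q x z * g x z)"
  unfolding sum_UNIV_triple pXZ_def sum_distrib_right by (rule sum_swap_inner)

lemma marginals_pos:
  assumes "Q \<in> Delta" and "Q $ (x,y,z) \<noteq> 0"
  shows "0 < Q $ (x,y,z)" "0 < pXY Q x y" "0 < pXZ Q x z" "0 < pYZ Q y z"
    "0 < pX Q x" "0 < pY Q y" "0 < pZ Q z"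
proof -
  show q: "0 < Q $ (x,y,z)"
    using Delta_nonneg[OF assms(1)] assms(2) by (simp add: order_less_le)
  show "0 < pXY Q x y" "0 < pXZ Q x z" "0 < pYZ Q y z" "0 < pX Q x" "0 < pY Q y" "0 < pZ Q z"
    using q pXY_ge pXZ_ge pYZ_ge pX_ge pY_ge pZ_ge assms(1) by (meson less_le_trans)+
qed

lemma DeltaP_subset_Delta: "DeltaP P \<subseteq> Delta"
  by (auto simp: DeltaP_def)

lemma DeltaP_marginals:
  assumes "Q \<in> DeltaP P"
  shows "Q \<in> Delta" "pXY Q = pXY P" "pXZ Q = pXZ P"
  using assms by (auto simp: DeltaP_def fun_eq_iff)

lemma pXY_combination:
  fixes A B :: "('x::finite,'y::finite,'z::finite) dist3"
  shows "pXY (u *\<^sub>R A + v *\<^sub>R B) x y = u * pXY A x y + v * pXY B x y"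
  by (simp add: pXY_def sum.distrib sum_distrib_left)

lemma pXZ_combination:
  fixes A B :: "('x::finite,'y::finite,'z::finite) dist3"
  shows "pXZ (u *\<^sub>R A + v *\<^sub>R B) x z = u * pXZ A x z + v * pXZ B x z"
  by (simp add: pXZ_def sum.distrib sum_distrib_left)

lemma pYZ_combination:
  fixes A B :: "('x::finite,'y::finite,'z::finite) dist3"
  shows "pYZ (u *\<^sub>R A + v *\<^sub>R B) y z = u * pYZ A y z + v * pYZ B y z"
  by (simp add: pYZ_def sum.distrib sum_distrib_left)

lemma convex_Delta: "convex (Delta :: ('x::finite,'y::finite,'z::finite) dist3 set)"
  unfolding convex_def
proof (intro ballI allI impI)
  fix A B :: "('x,'y,'z) dist3" and u v :: real
  assume A: "A \<in> Delta" and B: "B \<in> Delta" and uv: "0 \<le> u" "0 \<le> v" "u + v = 1"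
  have "(\<Sum>w\<in>UNIV. (u *\<^sub>R A + v *\<^sub>R B) $ w) = u * (\<Sum>w\<in>UNIV. A $ w) + v * (\<Sum>w\<in>UNIV. B $ w)"
    by (simp add: sum.distrib sum_distrib_left)
  also have "\<dots> = 1" using A B uv by (simp add: Delta_def)
  moreover have "\<forall>w. 0 \<le> (u *\<^sub>R A + v *\<^sub>R B) $ w"
    using Delta_nonneg[OF A] Delta_nonneg[OF B] uv by simp
  ultimately show "u *\<^sub>R A + v *\<^sub>R B \<in> Delta"
    by (simp add: Delta_def)
qed

lemma convex_DeltaP: "convex (DeltaP P)"
  unfolding convex_def
proof (intro ballI allI impI)
  fix A B and u v :: real
  assume A: "A \<in> DeltaP P" and B: "B \<in> DeltaP P" and uv: "0 \<le> u" "0 \<le> v" "u + v = 1"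
  have "u *\<^sub>R A + v *\<^sub>R B \<in> Delta"
    using A B uv by (intro convexD[OF convex_Delta]) (auto simp: DeltaP_def)
  moreover have "u * c + v * c = c" for c :: real
    using uv by (metis distrib_right mult_1)
  ultimately show "u *\<^sub>R A + v *\<^sub>R B \<in> DeltaP P"
    using A B unfolding DeltaP_def by (simp add: pXY_combination pXZ_combination)
qed

text \<open>\<open>H(X|Y) = H(X,Y) - H(Y)\<close> and \<open>H(X|Z) = H(X,Z) - H(Z)\<close>; zero masses contribute nothing
  because \<open>log 2 0 = 0\<close>.\<close>

definition H_X :: "('x::finite,'y::finite,'z::finite) dist3 \<Rightarrow> real" where
  "H_X Q = - (\<Sum>x\<in>UNIV. pX Q x * log 2 (pX Q x))"

definition H_X_Y :: "('x::finite,'y::finite,'z::finite) dist3 \<Rightarrow> real" where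
  "H_X_Y Q = (\<Sum>y\<in>UNIV. pY Q y * log 2 (pY Q y))
     - (\<Sum>x\<in>UNIV. \<Sum>y\<in>UNIV. pXY Q x y * log 2 (pXY Q x y))"

definition H_X_Z :: "('x::finite,'y::finite,'z::finite) dist3 \<Rightarrow> real" where
  "H_X_Z Q = (\<Sum>z\<in>UNIV. pZ Q z * log 2 (pZ Q z))
     - (\<Sum>x\<in>UNIV. \<Sum>z\<in>UNIV. pXZ Q x z * log 2 (pXZ Q x z))"

lemma H_X_cong: "pXY Q = pXY Q' \<Longrightarrow> H_X Q = H_X Q'"
  by (simp add: H_X_def pX_eq_sum_pXY)

lemma H_X_Y_cong: "pXY Q = pXY Q' \<Longrightarrow> H_X_Y Q = H_X_Y Q'"
  by (simp add: H_X_Y_def pY_eq_sum_pXY)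

lemma H_X_Z_cong: "pXZ Q = pXZ Q' \<Longrightarrow> H_X_Z Q = H_X_Z Q'"
  by (simp add: H_X_Z_def pZ_eq_sum_pXZ)

lemma MI_XY_cong:
  assumes "pXY Q = pXY Q'"
  shows "MI_XY Q = MI_XY Q'"
  unfolding MI_XY_def pX_eq_sum_pXY pY_eq_sum_pXY assms ..

subsection \<open>Chain rules\<close>

lemma MI_XY_Z_chain_rule:
  assumes "Q \<in> Delta"
  shows "MI_XY_Z Q = H_X_Z Q - H_X_YZ Q"
proof -
  have "MI_XY_Z Q = (\<Sum>x\<in>UNIV. \<Sum>y\<in>UNIV. \<Sum>z\<in>UNIV.
      (if Q $ (x,y,z) = 0 then 0 else Q $ (x,y,z) * log 2 (Q $ (x,y,z) / pYZ Q y z))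
      + Q $ (x,y,z) * log 2 (pZ Q z) - Q $ (x,y,z) * log 2 (pXZ Q x z))"
    unfolding MI_XY_Z_def sum_UNIV_triple
    by (intro sum.cong refl)
      (use marginals_pos[OF assms] in \<open>auto simp: log_mult_pos log_divide_pos algebra_simps\<close>)
  then show ?thesis
    unfolding H_X_Z_def H_X_YZ_def sum_weighted_Z[symmetric] sum_weighted_XZ[symmetric]
      sum_UNIV_triple
    by (simp add: sum.distrib sum_subtractf)
qed

lemma MI_XZ_Y_chain_rule:
  assumes "Q \<in> Delta"
  shows "MI_XZ_Y Q = H_X_Y Q - H_X_YZ Q"
proof -
  have "MI_XZ_Y Q = (\<Sum>x\<in>UNIV. \<Sum>y\<in>UNIV. \<Sum>z\<in>UNIV.
      (if Q $ (x,y,z) = 0 then 0 else Q $ (x,y,z) * log 2 (Q $ (x,y,z) / pYZ Q y z))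
      + Q $ (x,y,z) * log 2 (pY Q y) - Q $ (x,y,z) * log 2 (pXY Q x y))"
    unfolding MI_XZ_Y_def sum_UNIV_triple
    by (intro sum.cong refl)
      (use marginals_pos[OF assms] in \<open>auto simp: log_mult_pos log_divide_pos algebra_simps\<close>)
  then show ?thesis
    unfolding H_X_Y_def H_X_YZ_def sum_weighted_Y[symmetric] sum_weighted_XY[symmetric]
      sum_UNIV_triple
    by (simp add: sum.distrib sum_subtractf)
qed

lemma MI_X_YZ_chain_rule:
  assumes "Q \<in> Delta"
  shows "MI_X_YZ Q = H_X Q - H_X_YZ Q"
proof -
  have "MI_X_YZ Q = (\<Sum>x\<in>UNIV. \<Sum>y\<in>UNIV. \<Sum>z\<in>UNIV.
      (if Q $ (x,y,z) = 0 then 0 else Q $ (x,y,z) * log 2 (Q $ (x,y,z) / pYZ Q y z))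
      - Q $ (x,y,z) * log 2 (pX Q x))"
    unfolding MI_X_YZ_def sum_UNIV_triple
    by (intro sum.cong refl)
      (use marginals_pos[OF assms] in \<open>auto simp: log_mult_pos log_divide_pos algebra_simps\<close>)
  then show ?thesis
    unfolding H_X_def H_X_YZ_def sum_weighted_X[symmetric] sum_UNIV_triple
    by (simp add: sum_subtractf)
qed

lemma CoI_chain_rule:
  assumes "Q \<in> Delta"
  shows "CoI Q = MI_XY Q - H_X_Z Q + H_X_YZ Q"
  using MI_XY_Z_chain_rule[OF assms] by (simp add: CoI_def)

lemma DeltaP_chain_rules:
  assumes "Q \<in> DeltaP P"
  shows "MI_XY_Z Q = H_X_Z P - H_X_YZ Q"
    and "MI_XZ_Y Q = H_X_Y P - H_X_YZ Q"
    and "MI_X_YZ Q = H_X P - H_X_YZ Q"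
    and "CoI Q = (MI_XY P - H_X_Z P) + H_X_YZ Q"
proof -
  note marginals = DeltaP_marginals[OF assms]
  show "MI_XY_Z Q = H_X_Z P - H_X_YZ Q"
    using MI_XY_Z_chain_rule[OF marginals(1)] H_X_Z_cong[OF marginals(3)] by simp
  show "MI_XZ_Y Q = H_X_Y P - H_X_YZ Q"
    using MI_XZ_Y_chain_rule[OF marginals(1)] H_X_Y_cong[OF marginals(2)] by simp
  show "MI_X_YZ Q = H_X P - H_X_YZ Q"
    using MI_X_YZ_chain_rule[OF marginals(1)] H_X_cong[OF marginals(2)] by simp
  show "CoI Q = (MI_XY P - H_X_Z P) + H_X_YZ Q"
    using CoI_chain_rule[OF marginals(1)] H_X_Z_cong[OF marginals(3)] MI_XY_cong[OF marginals(2)]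
    by simp
qed

subsection \<open>Concavity of the conditional entropy\<close>

lemma H_X_YZ_eq_xlog_ratio:
  "H_X_YZ Q = - ((\<Sum>x\<in>UNIV. \<Sum>y\<in>UNIV. \<Sum>z\<in>UNIV. xlog_ratio (Q $ (x,y,z)) (pYZ Q y z)) / ln 2)"
  unfolding H_X_YZ_def sum_UNIV_triple sum_divide_distrib
  by (intro arg_cong[where f = uminus] sum.cong refl) (simp add: xlog_ratio_def log_def)

lemma concave_on_H_X_YZ: "concave_on (Delta :: ('x::finite,'y::finite,'z::finite) dist3 set) H_X_YZ"
  unfolding concave_on_def convex_on_def
proof (intro conjI convex_Delta ballI allI impI)
  fix A B :: "('x,'y,'z) dist3" and u v :: real
  assume A: "A \<in> Delta" and B: "B \<in> Delta" and uv: "0 \<le> u" "0 \<le> v" "u + v = 1"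
  define S where "S Q = (\<Sum>x\<in>UNIV. \<Sum>y\<in>UNIV. \<Sum>z\<in>UNIV. xlog_ratio (Q $ (x,y,z)) (pYZ Q y z))"
    for Q :: "('x,'y,'z) dist3"
  have pointwise: "xlog_ratio ((u *\<^sub>R A + v *\<^sub>R B) $ (x,y,z)) (u * pYZ A y z + v * pYZ B y z)
      \<le> u * xlog_ratio (A $ (x,y,z)) (pYZ A y z) + v * xlog_ratio (B $ (x,y,z)) (pYZ B y z)" for x y z
  proof -
    have "0 < A $ (x,y,z) \<Longrightarrow> 0 < pYZ A y z" "0 < B $ (x,y,z) \<Longrightarrow> 0 < pYZ B y z"
      using marginals_pos(4)[OF A, of x y z] marginals_pos(4)[OF B, of x y z] by auto
    moreover have "0 \<le> A $ (x,y,z)" "0 \<le> B $ (x,y,z)"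
      using Delta_nonneg A B by blast+
    moreover have "0 \<le> pYZ A y z" "0 \<le> pYZ B y z"
      using calculation(3,4) pYZ_ge[OF A, of x y z] pYZ_ge[OF B, of x y z] by linarith+
    ultimately show ?thesis
      using uv by (simp add: xlog_ratio_convex)
  qed
  have "S (u *\<^sub>R A + v *\<^sub>R B) \<le> (\<Sum>x\<in>UNIV. \<Sum>y\<in>UNIV. \<Sum>z\<in>UNIV.
          u * xlog_ratio (A $ (x,y,z)) (pYZ A y z) + v * xlog_ratio (B $ (x,y,z)) (pYZ B y z))"
    unfolding S_def pYZ_combination by (intro sum_mono pointwise)
  also have "\<dots> = u * S A + v * S B"
    unfolding S_def by (simp add: sum.distrib sum_distrib_left)
  finally have "S (u *\<^sub>R A + v *\<^sub>R B) / ln 2 \<le> (u * S A + v * S B) / ln 2"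
    by (simp add: divide_right_mono)
  then show "- H_X_YZ (u *\<^sub>R A + v *\<^sub>R B) \<le> u * - H_X_YZ A + v * - H_X_YZ B"
    unfolding H_X_YZ_eq_xlog_ratio S_def[symmetric] by (simp add: add_divide_distrib)
qed

theorem mainTheorem2:
  fixes P QP :: "('x::finite,'y::finite,'z::finite) dist3"
  assumes "P \<in> Delta" and "QP \<in> DeltaP P"
  shows "((\<forall>Q\<in>DeltaP P. MI_XY_Z QP \<le> MI_XY_Z Q) \<longleftrightarrow> (\<forall>Q\<in>DeltaP P. MI_XZ_Y QP \<le> MI_XZ_Y Q))
       \<and> ((\<forall>Q\<in>DeltaP P. MI_XZ_Y QP \<le> MI_XZ_Y Q) \<longleftrightarrow> (\<forall>Q\<in>DeltaP P. MI_X_YZ QP \<le> MI_X_YZ Q))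
       \<and> ((\<forall>Q\<in>DeltaP P. MI_X_YZ QP \<le> MI_X_YZ Q) \<longleftrightarrow> (\<forall>Q\<in>DeltaP P. CoI Q \<le> CoI QP))
       \<and> ((\<forall>Q\<in>DeltaP P. CoI Q \<le> CoI QP) \<longleftrightarrow> (\<forall>Q\<in>DeltaP P. H_X_YZ Q \<le> H_X_YZ QP))
       \<and> convex_on (DeltaP P) MI_XY_Z
       \<and> convex_on (DeltaP P) MI_XZ_Y
       \<and> convex_on (DeltaP P) MI_X_YZ
       \<and> concave_on (DeltaP P) CoI
       \<and> concave_on (DeltaP P) H_X_YZ
       \<and> convex {Q \<in> DeltaP P. \<forall>Q'\<in>DeltaP P. MI_XY_Z Q \<le> MI_XY_Z Q'}"
proof -
  let ?D = "DeltaP P"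
  have H: "concave_on ?D H_X_YZ"
    using concave_on_H_X_YZ DeltaP_subset_Delta convex_DeltaP
    unfolding concave_on_def by (rule convex_on_subset)
  have convex_on_shifted: "convex_on ?D f" if "\<And>Q. Q \<in> ?D \<Longrightarrow> f Q = c - H_X_YZ Q" for f c
  proof (rule convex_on_cong)
    show "convex_on ?D (\<lambda>Q. c - H_X_YZ Q)"
      using H by (intro convex_on_diff) (simp_all add: convex_on_const convex_DeltaP)
  qed (use that in simp)
  have MI_convex: "convex_on ?D MI_XY_Z" "convex_on ?D MI_XZ_Y" "convex_on ?D MI_X_YZ"
    by (rule convex_on_shifted, erule DeltaP_chain_rules)+
  have CoI_concave: "concave_on ?D CoI"
  proof (rule concave_on_cong)
    show "concave_on ?D (\<lambda>Q. (MI_XY P - H_X_Z P) + H_X_YZ Q)"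
      using H by (intro concave_on_add) (simp_all add: concave_on_const convex_DeltaP)
  qed (simp add: DeltaP_chain_rules(4)[of _ P])
  let ?H_max = "\<forall>Q\<in>?D. H_X_YZ Q \<le> H_X_YZ QP"
  have optimizer_iffs:
    "(\<forall>Q\<in>?D. MI_XY_Z QP \<le> MI_XY_Z Q) \<longleftrightarrow> ?H_max"
    "(\<forall>Q\<in>?D. MI_XZ_Y QP \<le> MI_XZ_Y Q) \<longleftrightarrow> ?H_max"
    "(\<forall>Q\<in>?D. MI_X_YZ QP \<le> MI_X_YZ Q) \<longleftrightarrow> ?H_max"
    "(\<forall>Q\<in>?D. CoI Q \<le> CoI QP) \<longleftrightarrow> ?H_max"
    by (intro ball_cong refl; simp add: DeltaP_chain_rules[of _ P] assms(2))+
  show ?thesis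
    unfolding optimizer_iffs
    by (intro conjI refl MI_convex CoI_concave H convex_minimizers[OF MI_convex(1)])
qed

end
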